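(* The bi-immune symmetric group $G_{\mathfrak{B}}$ is highly transitive: for every $k \geq 1$ and any two $k$-tuples $(a_1, \dots, a_k)$, $(b_1, \dots, b_k)$ of natural numbers, each with pairwise distinct entries, there exists $\sigma \in G_{\mathfrak{B}}$ with $\sigma(a_i) = b_i$ for $1 \le i \le k$.
   Context: $\mathbb{N}$ denotes the non-negative integers, and $\mathrm{Sym}(\mathbb{N})$ the group of all permutations of $\mathbb{N}$ under composition ($g \circ f$ means apply $f$ first). For $i \in \mathbb{N}$, $\sigma_{(i)}$ is the permutation swapping $i$ and $i+1$ and fixing all other numbers. For $A \subseteq \mathbb{N}$ with increasing enumeration $a_0 < a_1 < \cdots$, define $\sigma_A(x) = \lim_{n \to \infty} (\sigma_{(a_0)} \circ \sigma_{(a_1)} \circ \cdots \circ \sigma_{(a_n)})(x)$ (eventually constant for each $x$). A set $A$ is immune if it is infinite and contains no infinite computably enumerable subset; $A$ is bi-immune if both $A$ and $\mathbb{N} - A$ are immune. For bi-immune $A$, $\sigma_A$ is a permutation of $\mathbb{N}$. The bi-immune symmetric group $G_{\mathfrak{B}}$ is the subgroup of $\mathrm{Sym}(\mathbb{N})$ generated by $\{\sigma_A : A \text{ bi-immune}\}$. *)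

theory Defs
  imports Main "HOL-Library.Infinite_Set" "HOL-Algebra.Bij" "HOL-Algebra.Generated_Groups"
begin

text \<open>Codes for partial recursive functions (Kleene's mu-recursive functions),
  acting on argument lists; missing arguments are read as 0.\<close>
datatype recf = Zero | Succ | Proj nat | Cn recf "recf list" | Pr recf recf | Mn recf

definition arg :: "nat \<Rightarrow> nat list \<Rightarrow> nat" where
  "arg i xs = (if i < length xs then xs ! i else 0)"

inductive rec_eval :: "recf \<Rightarrow> nat list \<Rightarrow> nat \<Rightarrow> bool" where
  zero: "rec_eval Zero xs 0"
| succ: "rec_eval Succ xs (Suc (arg 0 xs))"
| proj: "rec_eval (Proj i) xs (arg i xs)"
| cn: "list_all2 (\<lambda>g y. rec_eval g xs y) gs ys \<Longrightarrow> rec_eval f ys z \<Longrightarrow> rec_eval (Cn f gs) xs z"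
| pr0: "rec_eval f xs z \<Longrightarrow> rec_eval (Pr f g) (0 # xs) z"
| prS: "rec_eval (Pr f g) (n # xs) y \<Longrightarrow> rec_eval g (n # y # xs) z \<Longrightarrow> rec_eval (Pr f g) (Suc n # xs) z"
| mn: "rec_eval f (n # xs) 0 \<Longrightarrow> (\<forall>m<n. \<exists>y. 0 < y \<and> rec_eval f (m # xs) y) \<Longrightarrow> rec_eval (Mn f) xs n"

definition ce :: "nat set \<Rightarrow> bool" where
  "ce A \<longleftrightarrow> (\<exists>f. A = {x. \<exists>y. rec_eval f [x] y})"

definition immune :: "nat set \<Rightarrow> bool" where
  "immune A \<longleftrightarrow> infinite A \<and> \<not> (\<exists>B. B \<subseteq> A \<and> infinite B \<and> ce B)"

definition bi_immune :: "nat set \<Rightarrow> bool" where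
  "bi_immune A \<longleftrightarrow> immune A \<and> immune (UNIV - A)"

definition adj_swap :: "nat \<Rightarrow> nat \<Rightarrow> nat" where
  "adj_swap i x = (if x = i then Suc i else if x = Suc i then i else x)"

fun prefix_comp :: "nat set \<Rightarrow> nat \<Rightarrow> nat \<Rightarrow> nat" where
  "prefix_comp A 0 = adj_swap (enumerate A 0)"
| "prefix_comp A (Suc n) = prefix_comp A n \<circ> adj_swap (enumerate A (Suc n))"

definition sigma_set :: "nat set \<Rightarrow> nat \<Rightarrow> nat" where
  "sigma_set A x = (THE y. eventually (\<lambda>n. prefix_comp A n x = y) sequentially)"

definition G_B :: "(nat \<Rightarrow> nat) set" where
  "G_B = generate (BijGroup (UNIV :: nat set)) {sigma_set A | A. bi_immune A}"

end

theory Submission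
  imports Defs "HOL-Library.Countable" "HOL-Combinatorics.Transposition"
begin

text \<open>If every element of \<open>A\<close> exceeds \<open>i\<close>, then \<open>\<sigma>\<^bsub>A \<union> {i}\<^esub> = (i i+1) \<circ> \<sigma>\<^bsub>A\<^esub>\<close>,
  so \<open>G\<^sub>\<frak>B\<close> contains the adjacent transposition \<open>(i i+1)\<close> as soon as there is a
  bi-immune \<open>A\<close> above \<open>i\<close> that stays bi-immune when \<open>i\<close> is added. Such an \<open>A\<close> is
  obtained by diagonalising against all c.e. sets: for the \<open>n\<close>-th c.e. set, if infinite,
  put one of its large elements into \<open>A\<close> and keep a larger one out of \<open>A\<close>.
  The adjacent transpositions generate all transpositions, and any injective map between
  finitely many points extends to a product of transpositions.\<close>

instance recf :: countable by countable_datatype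

definition ce_set :: "nat \<Rightarrow> nat set" where
  "ce_set n = {x. \<exists>y. rec_eval (from_nat n) [x] y}"

lemma ce_iff_ce_set: "ce B \<longleftrightarrow> (\<exists>n. B = ce_set n)"
  unfolding ce_def ce_set_def by (metis from_nat_to_nat)

lemma immuneI:
  assumes "infinite S" and "\<And>n. infinite (ce_set n) \<Longrightarrow> \<not> ce_set n \<subseteq> S"
  shows "immune S"
  using assms unfolding immune_def ce_iff_ce_set by blast

definition split_pair :: "nat \<Rightarrow> nat set \<Rightarrow> nat \<times> nat" where
  "split_pair m S =
     (if infinite S then (enumerate (S \<inter> {m..}) 0, enumerate (S \<inter> {m..}) 1) else (m, Suc m))"

lemma infinite_Int_atLeast: "infinite S \<Longrightarrow> infinite (S \<inter> {m::nat..})"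
proof -
  assume "infinite S"
  then have "infinite (S - {..<m})" by simp
  moreover have "S - {..<m} = S \<inter> {m..}" by auto
  ultimately show ?thesis by simp
qed

lemma split_pair_bounds: "m \<le> fst (split_pair m S)" "fst (split_pair m S) < snd (split_pair m S)"
  using enumerate_in_set[OF infinite_Int_atLeast, of S m] enumerate_mono[OF _ infinite_Int_atLeast, of 0 1 S m]
  by (auto simp: split_pair_def)

lemma split_pair_mem: "infinite S \<Longrightarrow> fst (split_pair m S) \<in> S \<and> snd (split_pair m S) \<in> S"
  using enumerate_in_set[OF infinite_Int_atLeast, of S m] by (auto simp: split_pair_def)

fun split_stage :: "(nat \<Rightarrow> nat set) \<Rightarrow> nat \<Rightarrow> nat \<Rightarrow> nat \<times> nat" where
  "split_stage F c 0 = split_pair c (F 0)"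
| "split_stage F c (Suc n) = split_pair (Suc (snd (split_stage F c n))) (F (Suc n))"

definition splitting_set :: "(nat \<Rightarrow> nat set) \<Rightarrow> nat \<Rightarrow> nat set" where
  "splitting_set F c = range (\<lambda>n. fst (split_stage F c n))"

lemma split_stage_fst_less_snd: "fst (split_stage F c n) < snd (split_stage F c n)"
  by (cases n) (simp_all add: split_pair_bounds)

lemma split_stage_snd_less_fst_Suc: "snd (split_stage F c n) < fst (split_stage F c (Suc n))"
  using split_pair_bounds(1)[of "Suc (snd (split_stage F c n))"] by (simp add: Suc_le_eq)

lemma split_stage_mem:
  "infinite (F n) \<Longrightarrow> fst (split_stage F c n) \<in> F n \<and> snd (split_stage F c n) \<in> F n"
  by (cases n) (simp_all add: split_pair_mem)

lemma strict_mono_fst_split_stage: "strict_mono (\<lambda>n. fst (split_stage F c n))"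
  unfolding strict_mono_Suc_iff
  using split_stage_fst_less_snd split_stage_snd_less_fst_Suc less_trans by blast

lemma strict_mono_snd_split_stage: "strict_mono (\<lambda>n. snd (split_stage F c n))"
  unfolding strict_mono_Suc_iff
  using split_stage_fst_less_snd split_stage_snd_less_fst_Suc less_trans by blast

lemma split_stage_ge: "c \<le> fst (split_stage F c n)"
  using split_pair_bounds(1)[of c "F 0"] strict_mono_less_eq[OF strict_mono_fst_split_stage[of F c], of 0 n]
  by simp

lemma splitting_set_atLeast: "splitting_set F c \<subseteq> {c..}"
  unfolding splitting_set_def using split_stage_ge by auto

lemma snd_split_stage_notin: "snd (split_stage F c n) \<notin> splitting_set F c"
proof
  assume "snd (split_stage F c n) \<in> splitting_set F c"
  then obtain m where m: "snd (split_stage F c n) = fst (split_stage F c m)"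
    unfolding splitting_set_def by auto
  have mono: "fst (split_stage F c i) \<le> fst (split_stage F c j) \<longleftrightarrow> i \<le> j" for i j
    using strict_mono_less_eq[OF strict_mono_fst_split_stage] .
  show False
  proof (cases "m \<le> n")
    case True
    then show False using m mono[of m n] split_stage_fst_less_snd[of F c n] by simp
  next
    case False
    then show False
      using m mono[of "Suc n" m] split_stage_snd_less_fst_Suc[of F c n] by simp
  qed
qed

text \<open>The points \<open>snd (split_stage ce_set c n)\<close> lie above \<open>c\<close> and outside the splitting set,
  which is why adding elements below \<open>c\<close> preserves bi-immunity.\<close>
lemma bi_immune_splitting_set_Un:
  assumes "E \<subseteq> {..<c}"
  shows "bi_immune (splitting_set ce_set c \<union> E)"
proof -
  define X where "X = splitting_set ce_set c"
  define Q where "Q = range (\<lambda>n. snd (split_stage ce_set c n))"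
  have "Q \<subseteq> {c..}"
    using split_stage_ge split_stage_fst_less_snd unfolding Q_def
    by (fastforce intro: order.strict_implies_order order.trans)
  then have Q_out: "Q \<subseteq> UNIV - (X \<union> E)"
    using assms snd_split_stage_notin unfolding Q_def X_def by fastforce
  have "infinite X" "infinite Q"
    unfolding X_def Q_def splitting_set_def
    by (simp_all add: range_inj_infinite strict_mono_imp_inj_on
        strict_mono_fst_split_stage strict_mono_snd_split_stage)
  have "immune (X \<union> E)"
  proof (rule immuneI)
    fix n assume "infinite (ce_set n)"
    then have "snd (split_stage ce_set c n) \<in> ce_set n \<inter> Q"
      using split_stage_mem unfolding Q_def by blast
    then show "\<not> ce_set n \<subseteq> X \<union> E" using Q_out by blast
  qed (use \<open>infinite X\<close> in simp)
  moreover have "immune (UNIV - (X \<union> E))"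
  proof (rule immuneI)
    fix n assume "infinite (ce_set n)"
    then have "fst (split_stage ce_set c n) \<in> ce_set n \<inter> X"
      using split_stage_mem unfolding X_def splitting_set_def by blast
    then show "\<not> ce_set n \<subseteq> UNIV - (X \<union> E)" by blast
  qed (use \<open>infinite Q\<close> Q_out finite_subset in blast)
  ultimately show ?thesis unfolding bi_immune_def X_def by blast
qed

lemma adj_swap_eq_transpose: "adj_swap i = transpose i (Suc i)"
  by (simp add: fun_eq_iff adj_swap_def transpose_def)

lemma bij_prefix_comp: "bij (prefix_comp A n)"
  by (induction n) (auto simp only: prefix_comp.simps adj_swap_eq_transpose bij_transpose intro!: bij_comp)

lemma prefix_comp_stable:
  assumes "infinite A" "x \<le> n" "n \<le> m"
  shows "prefix_comp A m x = prefix_comp A n x"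
  using assms(3)
proof (induction m rule: dec_induct)
  case (step m)
  have "x < enumerate A (Suc m)"
    using le_enumerate[OF assms(1), of "Suc m"] assms(2) step(1) by linarith
  then have "adj_swap (enumerate A (Suc m)) x = x" by (simp add: adj_swap_def)
  then show ?case using step(3) by simp
qed simp

lemma sigma_set_eq_prefix_comp:
  assumes "infinite A" "x \<le> n"
  shows "sigma_set A x = prefix_comp A n x"
  unfolding sigma_set_def
proof (rule the_equality)
  show "eventually (\<lambda>m. prefix_comp A m x = prefix_comp A n x) sequentially"
    unfolding eventually_sequentially using prefix_comp_stable[OF assms] by blast
next
  fix y assume "eventually (\<lambda>m. prefix_comp A m x = y) sequentially"
  then obtain N where "\<And>m. N \<le> m \<Longrightarrow> prefix_comp A m x = y"
    unfolding eventually_sequentially by blast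
  then show "y = prefix_comp A n x"
    using prefix_comp_stable[OF assms, of "max N n"] by simp
qed

lemma inj_sigma_set:
  assumes "infinite A"
  shows "inj (sigma_set A)"
proof (rule injI)
  fix x y assume "sigma_set A x = sigma_set A y"
  then have "prefix_comp A (max x y) x = prefix_comp A (max x y) y"
    using sigma_set_eq_prefix_comp[OF assms] by (metis max.cobounded1 max.cobounded2)
  then show "x = y" using bij_prefix_comp[of A "max x y"] by (simp add: bij_def inj_eq)
qed

lemma prefix_comp_atMost:
  assumes "infinite A" "g \<notin> A"
  shows "prefix_comp A n ` {..g} \<subseteq> {..g}"
proof -
  have swap: "adj_swap (enumerate A k) ` {..g} \<subseteq> {..g}" for k
  proof -
    have "enumerate A k \<noteq> g" using enumerate_in_set[OF assms(1), of k] assms(2) by blast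
    then show ?thesis by (auto simp: adj_swap_def)
  qed
  show ?thesis
    by (induction n) (use swap in \<open>simp_all add: image_comp[symmetric], blast\<close>)
qed

text \<open>A non-element \<open>g\<close> of \<open>A\<close> is never crossed, so \<open>\<sigma>\<^bsub>A\<^esub>\<close> permutes each \<open>{..g}\<close>.\<close>
lemma bij_sigma_set:
  assumes "infinite A" "infinite (UNIV - A)"
  shows "bij (sigma_set A)"
proof (rule bijI)
  show "inj (sigma_set A)" using inj_sigma_set[OF assms(1)] .
  have "z \<in> range (sigma_set A)" for z
  proof -
    obtain g where g: "g \<notin> A" "z \<le> g"
      using assms(2) unfolding infinite_nat_iff_unbounded_le by blast
    have "sigma_set A ` {..g} = prefix_comp A g ` {..g}"
      using sigma_set_eq_prefix_comp[OF assms(1)] by (intro image_cong) auto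
    then have "sigma_set A ` {..g} \<subseteq> {..g}"
      using prefix_comp_atMost[OF assms(1) g(1)] by simp
    then have "sigma_set A ` {..g} = {..g}"
      using inj_sigma_set[OF assms(1)] by (intro endo_inj_surj) (auto intro: inj_on_subset)
    then show ?thesis using g(2) by auto
  qed
  then show "surj (sigma_set A)" by blast
qed

lemma enumerate_insert_below:
  assumes "\<forall>a\<in>A. i < a"
  shows "enumerate (insert i A) 0 = i" "enumerate (insert i A) (Suc n) = enumerate A n"
proof -
  have "(LEAST n. n \<in> insert i A) = i"
    by (rule Least_equality) (use assms in \<open>auto simp: less_imp_le\<close>)
  then show first: "enumerate (insert i A) 0 = i" by (simp only: enumerate_0)
  have "insert i A - {i} = A" using assms by auto
  then show "enumerate (insert i A) (Suc n) = enumerate A n"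
    by (simp only: enumerate_Suc' first)
qed

lemma prefix_comp_insert_below:
  assumes "\<forall>a\<in>A. i < a"
  shows "prefix_comp (insert i A) (Suc n) = transpose i (Suc i) \<circ> prefix_comp A n"
  by (induction n)
    (simp_all only: prefix_comp.simps enumerate_insert_below[OF assms] adj_swap_eq_transpose comp_assoc)

lemma sigma_set_insert_below:
  assumes "infinite A" "\<forall>a\<in>A. i < a"
  shows "sigma_set (insert i A) = transpose i (Suc i) \<circ> sigma_set A"
proof
  fix x
  have "sigma_set (insert i A) x = prefix_comp (insert i A) (Suc x) x"
    using assms(1) by (intro sigma_set_eq_prefix_comp) auto
  also have "\<dots> = transpose i (Suc i) (prefix_comp A x x)"
    using prefix_comp_insert_below[OF assms(2)] by simp
  also have "\<dots> = transpose i (Suc i) (sigma_set A x)"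
    using sigma_set_eq_prefix_comp[OF assms(1), of x x] by simp
  finally show "sigma_set (insert i A) x = (transpose i (Suc i) \<circ> sigma_set A) x" by simp
qed

lemma carrier_BijGroup_UNIV: "carrier (BijGroup UNIV) = {f. bij f}"
  by (simp add: BijGroup_def Bij_def)

lemma subgroup_G_B: "subgroup G_B (BijGroup UNIV)"
  unfolding G_B_def
  by (rule group.generate_is_subgroup[OF group_BijGroup])
    (use bij_sigma_set in \<open>auto simp: carrier_BijGroup_UNIV bi_immune_def immune_def\<close>)

lemma bij_of_mem_G_B: "f \<in> G_B \<Longrightarrow> bij f"
  using subgroup.mem_carrier[OF subgroup_G_B] carrier_BijGroup_UNIV by blast

lemma id_mem_G_B: "id \<in> G_B"
  using subgroup.one_closed[OF subgroup_G_B] by (simp add: BijGroup_def restrict_UNIV id_def)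

lemma comp_mem_G_B: "f \<in> G_B \<Longrightarrow> g \<in> G_B \<Longrightarrow> f \<circ> g \<in> G_B"
  using subgroup.m_closed[OF subgroup_G_B, of f g] subgroup.mem_carrier[OF subgroup_G_B]
  by (simp add: BijGroup_def compose_def restrict_UNIV comp_def)

lemma inv_mem_G_B:
  assumes "f \<in> G_B"
  shows "inv_into UNIV f \<in> G_B"
proof -
  have "f \<in> Bij UNIV"
    using subgroup.mem_carrier[OF subgroup_G_B assms] by (simp add: BijGroup_def)
  then have "m_inv (BijGroup UNIV) f = inv_into UNIV f"
    by (simp add: inv_BijGroup restrict_UNIV)
  then show ?thesis using subgroup.m_inv_closed[OF subgroup_G_B assms] by simp
qed

lemma sigma_set_mem_G_B: "bi_immune A \<Longrightarrow> sigma_set A \<in> G_B"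
  unfolding G_B_def by (rule generate.incl) blast

lemma adjacent_transpose_mem_G_B: "transpose i (Suc i) \<in> G_B"
proof -
  define X where "X = splitting_set ce_set (Suc i)"
  have bi_immune: "bi_immune X" "bi_immune (insert i X)"
    using bi_immune_splitting_set_Un[of "{}" "Suc i"] bi_immune_splitting_set_Un[of "{i}" "Suc i"]
    by (simp_all add: X_def)
  then have X: "infinite X" "infinite (UNIV - X)" unfolding bi_immune_def immune_def by blast+
  have "\<forall>a\<in>X. i < a" using splitting_set_atLeast unfolding X_def by fastforce
  then have "sigma_set (insert i X) \<circ> inv_into UNIV (sigma_set X) = transpose i (Suc i)"
    using sigma_set_insert_below[OF X(1)] bij_sigma_set[OF X] surj_iff bij_is_surj
    by (metis comp_assoc comp_id)
  then show ?thesis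
    using comp_mem_G_B inv_mem_G_B sigma_set_mem_G_B bi_immune by metis
qed

lemma transpose_mem_G_B: "transpose a b \<in> G_B"
proof -
  have "transpose a b \<in> G_B" if "a \<le> b" for a b :: nat
    using that
  proof (induction b rule: dec_induct)
    case base
    then show ?case by (simp only: transpose_same id_mem_G_B)
  next
    case (step b)
    show ?case
    proof (cases "a = b")
      case True
      then show ?thesis using adjacent_transpose_mem_G_B by simp
    next
      case False
      then have "transpose a (Suc b) = transpose b (Suc b) \<circ> transpose a b \<circ> transpose b (Suc b)"
        using transpose_comp_triple[of "Suc b" a b] step(1) by (simp add: transpose_commute)
      then show ?thesis using step.IH adjacent_transpose_mem_G_B comp_mem_G_B by metis
    qed
  qed
  then show ?thesis by (metis nat_le_linear transpose_commute)
qed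

lemma map_eq_by_transpositions:
  fixes G :: "('a \<Rightarrow> 'a) set"
  assumes inj: "\<And>f. f \<in> G \<Longrightarrow> inj f" and "id \<in> G"
    and comp: "\<And>f g. f \<in> G \<Longrightarrow> g \<in> G \<Longrightarrow> f \<circ> g \<in> G"
    and transpositions: "\<And>a b. transpose a b \<in> G"
  shows "length as = length bs \<Longrightarrow> distinct as \<Longrightarrow> distinct bs \<Longrightarrow> \<exists>\<sigma>\<in>G. map \<sigma> as = bs"
proof (induction as arbitrary: bs)
  case Nil
  then show ?case using \<open>id \<in> G\<close> by auto
next
  case (Cons a as)
  then obtain b bs' where bs: "bs = b # bs'" by (cases bs) auto
  with Cons obtain \<sigma> where \<sigma>: "\<sigma> \<in> G" "map \<sigma> as = bs'" by auto
  have "map (transpose (\<sigma> a) b) bs' = bs'"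
  proof (rule map_idI)
    fix y assume "y \<in> set bs'"
    then obtain x where "x \<in> set as" "y = \<sigma> x" using \<sigma>(2) by auto
    moreover have "a \<notin> set as" "b \<notin> set bs'" using Cons.prems bs by auto
    ultimately show "transpose (\<sigma> a) b y = y"
      using inj[OF \<sigma>(1)] \<open>y \<in> set bs'\<close> by (metis inj_eq transpose_apply_other)
  qed
  moreover have "map (transpose (\<sigma> a) b \<circ> \<sigma>) (a # as) = b # map (transpose (\<sigma> a) b) (map \<sigma> as)"
    by simp
  ultimately have "map (transpose (\<sigma> a) b \<circ> \<sigma>) (a # as) = bs" using \<sigma>(2) bs by simp
  then show ?case using comp[OF transpositions \<sigma>(1)] by blast
qed

theorem mainTheorem7:
  fixes as bs :: "nat list" and k :: nat
  assumes "k \<ge> 1" and "length as = k" and "length bs = k"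
    and "distinct as" and "distinct bs"
  shows "\<exists>\<sigma>\<in>G_B. \<forall>i<k. \<sigma> (as ! i) = bs ! i"
proof -
  obtain \<sigma> where "\<sigma> \<in> G_B" "map \<sigma> as = bs"
    using map_eq_by_transpositions[OF bij_is_inj[OF bij_of_mem_G_B] id_mem_G_B comp_mem_G_B
        transpose_mem_G_B] assms(2-5)
    by metis
  then show ?thesis using assms(2) by (metis nth_map)
qed

end
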